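(* Let $a\in(0,0.5)$. Let $f(\phi\mid \mathrm{HS+})$ and $f(\phi\mid\mathrm{HTHS+})$ denote the univariate marginal prior densities of $\phi$ under the HS+ and HTHS+ priors (defined in the context). Then there exist positive numbers $C_a$ and $D_a$ such that for all $\phi\neq 0$, $$C_a\, f(\phi\mid \mathrm{HS+})\le \frac{a\,2^{a-1}}{\sqrt{\pi}\,|\phi|^{1+2a}}\,\Gamma_L\!\left(0.5+a,\tfrac{\phi^2}{2}\right)+\frac{a\,2^{-a-1}}{\sqrt{\pi}\,|\phi|^{1-2a}}\,\Gamma_U\!\left(0.5-a,\tfrac{\phi^2}{2}\right)\le D_a\, f(\phi\mid \mathrm{HTHS+}).$$
   Context: Under both priors, $\phi\mid\gamma\sim\mathcal{N}(0,1/\gamma)$ with $\gamma>0$. Under HS+, $\gamma$ has density $\pi(\gamma)=\frac{\gamma^{-1/2}\log\gamma}{\pi^2(\gamma-1)}$ on $(0,\infty)$. Under HTHS+, $\gamma$ has the log-Cauchy density $\pi(\gamma)=\frac{2}{\gamma\left((\log\gamma)^2+4\pi^2\right)}$ on $(0,\infty)$. The marginal density of $\phi$ is $f(\phi)=\int_0^\infty \mathcal{N}(\phi\mid 0,1/\gamma)\pi(\gamma)\,\mathrm{d}\gamma$. $\Gamma_L(s,x)=\int_0^x t^{s-1}e^{-t}\,\mathrm{d}t$ and $\Gamma_U(s,x)=\int_x^\infty t^{s-1}e^{-t}\,\mathrm{d}t$ are the lower and upper incomplete gamma functions. *)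

theory Defs
  imports "HOL-Analysis.Analysis"
begin

definition normal_prec_density :: "real \<Rightarrow> real \<Rightarrow> real" where
  "normal_prec_density \<gamma> \<phi> = sqrt (\<gamma> / (2 * pi)) * exp (- \<gamma> * \<phi>\<^sup>2 / 2)"

text \<open>HS+ mixing density of gamma on (0,infinity) (value at gamma = 1 is a null set).\<close>
definition hs_plus_gamma_density :: "real \<Rightarrow> real" where
  "hs_plus_gamma_density \<gamma> = \<gamma> powr (-1/2) * ln \<gamma> / (pi\<^sup>2 * (\<gamma> - 1))"

text \<open>HTHS+ (log-Cauchy) mixing density of gamma on (0,infinity).\<close>
definition hths_plus_gamma_density :: "real \<Rightarrow> real" where
  "hths_plus_gamma_density \<gamma> = 2 / (\<gamma> * ((ln \<gamma>)\<^sup>2 + 4 * pi\<^sup>2))"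

definition f_HS_plus :: "real \<Rightarrow> real" where
  "f_HS_plus \<phi> = (LBINT \<gamma>:{0<..}. normal_prec_density \<gamma> \<phi> * hs_plus_gamma_density \<gamma>)"

definition f_HTHS_plus :: "real \<Rightarrow> real" where
  "f_HTHS_plus \<phi> = (LBINT \<gamma>:{0<..}. normal_prec_density \<gamma> \<phi> * hths_plus_gamma_density \<gamma>)"

definition lower_inc_gamma :: "real \<Rightarrow> real \<Rightarrow> real" where
  "lower_inc_gamma s x = (LBINT t:{0<..<x}. t powr (s - 1) * exp (- t))"

definition upper_inc_gamma :: "real \<Rightarrow> real \<Rightarrow> real" where
  "upper_inc_gamma s x = (LBINT t:{x<..}. t powr (s - 1) * exp (- t))"

end

theory Submission
  imports Defs
begin

text \<open>
  The middle term is the marginal density of \<open>\<phi>\<close> under a third precision prior, the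
  log-Laplace prior (\<open>ln \<gamma>\<close> Laplace distributed with rate \<open>a\<close>): splitting its mixture
  integral at \<open>\<gamma> = 1\<close> and substituting \<open>t = \<phi>\<^sup>2 \<gamma> / 2\<close> gives the two incomplete gamma terms.
  Both inequalities then follow from pointwise bounds between the mixing densities.
  Writing \<open>\<gamma> = exp (2 v)\<close>, the HS+ density is \<open>v / (\<pi>\<^sup>2 \<gamma> sinh v)\<close>, which is of order
  \<open>\<bar>v\<bar> exp (- \<bar>v\<bar>) / \<gamma>\<close> and hence dominated by the log-Laplace density
  \<open>a/2 exp (- 2 a \<bar>v\<bar>) / \<gamma>\<close> because \<open>2 a < 1\<close>; and the log-Laplace density is dominated
  by the log-Cauchy density of HTHS+ because \<open>w\<^sup>2 exp (- a \<bar>w\<bar>)\<close> is bounded.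
\<close>

lemma mult_exp_le_sinh:
  fixes c u :: real
  assumes "c < 1" "0 \<le> u"
  shows "u * exp (c * u) \<le> (exp 1 + 4 / (1 - c)) * sinh u"
proof (cases "u \<le> 1")
  case True
  have "c * u \<le> 1"
    using assms True mult_right_mono[of c 1 u] by linarith
  hence "u * exp (c * u) \<le> exp 1 * u"
    using assms by (simp add: mult.commute mult_left_mono)
  also have "\<dots> \<le> exp 1 * sinh u"
    using real_le_x_sinh[OF assms(2)] by (simp add: sinh_field_def exp_minus)
  also have "\<dots> \<le> (exp 1 + 4 / (1 - c)) * sinh u"
    using assms by (intro mult_right_mono) auto
  finally show ?thesis .
next
  case False
  have "(1 - c) * u \<le> exp ((1 - c) * u)"
    using exp_ge_add_one_self[of "(1 - c) * u"] by linarith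
  hence "u * exp (c * u) \<le> exp ((1 - c) * u) / (1 - c) * exp (c * u)"
    using assms by (intro mult_right_mono) (auto simp: field_simps)
  also have "\<dots> = exp u / (1 - c)"
    by (simp add: exp_add[symmetric] algebra_simps)
  also have "exp u \<le> 4 * sinh u"
  proof -
    have "2 \<le> exp (2 * u)"
      using exp_ge_add_one_self[of "2 * u"] False by linarith
    hence "2 * exp (- u) \<le> exp u"
      by (simp add: exp_minus field_simps flip: exp_add)
    thus ?thesis
      by (simp add: sinh_field_def)
  qed
  hence "exp u / (1 - c) \<le> 4 / (1 - c) * sinh u"
    using assms by (simp add: divide_right_mono)
  also have "\<dots> \<le> (exp 1 + 4 / (1 - c)) * sinh u"
    using False by (intro mult_right_mono) auto
  finally show ?thesis .
qed

lemma divide_sinh_le_exp_neg_abs: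
  fixes c u :: real
  assumes "c < 1"
  shows "u / sinh u \<le> (exp 1 + 4 / (1 - c)) * exp (- c * \<bar>u\<bar>)"
proof (cases "u = 0")
  case False
  define K where "K = exp 1 + 4 / (1 - c)"
  have "\<bar>u\<bar> * exp (c * \<bar>u\<bar>) \<le> K * sinh \<bar>u\<bar>"
    unfolding K_def using mult_exp_le_sinh[OF assms, of "\<bar>u\<bar>"] by simp
  hence "\<bar>u\<bar> \<le> K * exp (- c * \<bar>u\<bar>) * sinh \<bar>u\<bar>"
    by (simp add: exp_minus field_simps)
  hence "\<bar>u\<bar> / sinh \<bar>u\<bar> \<le> K * exp (- c * \<bar>u\<bar>)"
    using False by (simp add: divide_le_eq)
  moreover have "u / sinh u = \<bar>u\<bar> / sinh \<bar>u\<bar>"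
    by (simp add: abs_if)
  ultimately show ?thesis
    unfolding K_def by simp
qed (use assms in \<open>simp add: add_nonneg_nonneg\<close>)

lemma square_mult_exp_neg_abs_le:
  fixes a u :: real
  assumes "0 < a"
  shows "u\<^sup>2 * exp (- a * \<bar>u\<bar>) \<le> 4 / a\<^sup>2"
proof -
  have "a * \<bar>u\<bar> / 2 \<le> exp (a * \<bar>u\<bar> / 2)"
    using exp_ge_add_one_self[of "a * \<bar>u\<bar> / 2"] by linarith
  hence "(a * \<bar>u\<bar> / 2)\<^sup>2 \<le> (exp (a * \<bar>u\<bar> / 2))\<^sup>2"
    using assms by (intro power_mono) auto
  also have "(exp (a * \<bar>u\<bar> / 2))\<^sup>2 = exp (a * \<bar>u\<bar>)"
    by (simp add: power2_eq_square flip: exp_add)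
  finally show ?thesis
    using assms by (simp add: exp_minus field_simps power2_eq_square)
qed

section \<open>Comparison of the mixing densities\<close>

definition log_laplace_gamma_density :: "real \<Rightarrow> real \<Rightarrow> real" where
  "log_laplace_gamma_density a \<gamma> = a / 2 * exp (- a * \<bar>ln \<gamma>\<bar>) / \<gamma>"

lemma log_laplace_gamma_density_measurable [measurable]:
  "log_laplace_gamma_density a \<in> borel_measurable lborel"
  unfolding log_laplace_gamma_density_def by measurable

lemma hths_plus_gamma_density_measurable [measurable]:
  "hths_plus_gamma_density \<in> borel_measurable lborel"
  unfolding hths_plus_gamma_density_def by measurable

lemma hs_plus_gamma_density_eq_sinh:
  assumes "0 < \<gamma>"
  shows "hs_plus_gamma_density \<gamma> = (ln \<gamma> / 2) / sinh (ln \<gamma> / 2) / (pi\<^sup>2 * \<gamma>)"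
proof -
  define v where "v = ln \<gamma> / 2"
  have \<gamma>: "\<gamma> = exp v * exp v"
    using assms by (simp add: v_def flip: exp_add)
  have "\<gamma> powr (-1/2) = exp (- v)"
    using assms by (simp add: v_def powr_def)
  moreover have "\<gamma> - 1 = 2 * exp v * sinh v"
    unfolding \<gamma> by (simp add: sinh_field_def exp_minus field_simps)
  moreover have "ln \<gamma> = 2 * v"
    by (simp add: v_def)
  ultimately have "hs_plus_gamma_density \<gamma> = exp (- v) * (2 * v) / (pi\<^sup>2 * (2 * exp v * sinh v))"
    unfolding hs_plus_gamma_density_def by simp
  also have "\<dots> = v / sinh v / (pi\<^sup>2 * \<gamma>)"
    unfolding \<gamma> by (cases "v = 0") (simp_all add: exp_minus field_simps)
  finally show ?thesis
    by (simp add: v_def)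
qed

lemma hs_plus_gamma_density_le_log_laplace:
  assumes "0 < a" "a < 1/2" "0 < \<gamma>"
  shows "hs_plus_gamma_density \<gamma>
           \<le> 2 * (exp 1 + 4 / (1 - 2 * a)) / (a * pi\<^sup>2) * log_laplace_gamma_density a \<gamma>"
proof -
  define K where "K = exp 1 + 4 / (1 - 2 * a)"
  have "(ln \<gamma> / 2) / sinh (ln \<gamma> / 2) \<le> K * exp (- a * \<bar>ln \<gamma>\<bar>)"
    using divide_sinh_le_exp_neg_abs[of "2 * a" "ln \<gamma> / 2"] assms by (simp add: K_def)
  hence "hs_plus_gamma_density \<gamma> \<le> K * exp (- a * \<bar>ln \<gamma>\<bar>) / (pi\<^sup>2 * \<gamma>)"
    unfolding hs_plus_gamma_density_eq_sinh[OF assms(3)]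
    using assms by (intro divide_right_mono) auto
  also have "\<dots> = 2 * K / (a * pi\<^sup>2) * log_laplace_gamma_density a \<gamma>"
    using assms by (simp add: log_laplace_gamma_density_def)
  finally show ?thesis
    by (simp add: K_def)
qed

lemma log_laplace_le_hths_plus_gamma_density:
  assumes "0 < a" "0 < \<gamma>"
  shows "log_laplace_gamma_density a \<gamma> \<le> (1 / a + a * pi\<^sup>2) * hths_plus_gamma_density \<gamma>"
proof -
  define L E where "L = (ln \<gamma>)\<^sup>2" and "E = exp (- a * \<bar>ln \<gamma>\<bar>)"
  have "a / 2 * (L * E) \<le> a / 2 * (4 / a\<^sup>2)"
    unfolding L_def E_def using square_mult_exp_neg_abs_le[OF assms(1)] assms
    by (intro mult_left_mono) auto
  also have "\<dots> = 2 / a"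
    using assms by (simp add: power2_eq_square)
  finally have "a / 2 * (L * E) \<le> 2 / a" .
  moreover have "2 * a * pi\<^sup>2 * E \<le> 2 * a * pi\<^sup>2"
    unfolding E_def using assms by (simp add: mult_le_cancel_left1)
  moreover have "a / 2 * E * (L + 4 * pi\<^sup>2) = a / 2 * (L * E) + 2 * a * pi\<^sup>2 * E"
    by (simp add: algebra_simps)
  ultimately have bound: "a / 2 * E * (L + 4 * pi\<^sup>2) \<le> 2 * (1 / a + a * pi\<^sup>2)"
    by (simp add: algebra_simps)
  have pos: "0 < L + 4 * pi\<^sup>2"
    unfolding L_def by (simp add: add_nonneg_pos)
  have "log_laplace_gamma_density a \<gamma> = a / 2 * E * (L + 4 * pi\<^sup>2) / (\<gamma> * (L + 4 * pi\<^sup>2))"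
    using pos unfolding log_laplace_gamma_density_def E_def[symmetric] by simp
  also have "\<dots> \<le> 2 * (1 / a + a * pi\<^sup>2) / (\<gamma> * (L + 4 * pi\<^sup>2))"
    using bound pos assms by (intro divide_right_mono) auto
  also have "\<dots> = (1 / a + a * pi\<^sup>2) * hths_plus_gamma_density \<gamma>"
    unfolding hths_plus_gamma_density_def L_def[symmetric] by simp
  finally show ?thesis .
qed

section \<open>Integrals against \<open>x powr c * exp (- s * x)\<close>\<close>

lemma set_integrable_powr_exp:
  fixes c s :: real
  assumes "-1 < c" "0 < s"
  shows "set_integrable lborel {0<..} (\<lambda>x. x powr c * exp (- s * x))"
proof -
  have "(\<lambda>t. complex_of_real t powr (of_real (c + 1) - 1) / of_real (exp (s * t)))
          absolutely_integrable_on {0<..}"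
    using assms by (intro absolutely_integrable_Gamma_integral) auto
  hence "(\<lambda>t. complex_of_real (t powr c * exp (- s * t))) absolutely_integrable_on {0<..}"
    by (rule set_integrable_cong[THEN iffD1, rotated -1])
       (auto simp: powr_of_real exp_minus field_simps)
  hence "set_integrable lebesgue {0<..} (\<lambda>t. t powr c * exp (- s * t))"
    by (simp add: set_integrable_def scaleR_conv_of_real complex_of_real_integrable_eq
             flip: of_real_mult)
  thus ?thesis
    unfolding set_integrable_def by (subst (asm) integrable_completion) measurable
qed

lemma set_integral_powr_exp_rescale:
  fixes s p :: real and A B :: "real set"
  assumes "0 < s" and "\<And>x. s * x \<in> A \<longleftrightarrow> x \<in> B" and "B \<subseteq> {0<..}"
  shows "(LBINT t:A. t powr (p - 1) * exp (- t)) = s powr p * (LBINT x:B. x powr (p - 1) * exp (- s * x))"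
proof -
  have "(LBINT t:A. t powr (p - 1) * exp (- t))
      = s * (LBINT x. indicator A (s * x) * ((s * x) powr (p - 1) * exp (- (s * x))))"
    using lborel_integral_real_affine[of s "\<lambda>t. indicator A t * (t powr (p - 1) * exp (- t))" 0] assms(1)
    by (simp add: set_lebesgue_integral_def)
  also have "(\<lambda>x. indicator A (s * x) * ((s * x) powr (p - 1) * exp (- (s * x))))
           = (\<lambda>x. s powr (p - 1) * (indicator B x * (x powr (p - 1) * exp (- s * x))))"
    using assms by (force simp: indicator_def powr_mult)
  also have "s * (LBINT x. s powr (p - 1) * (indicator B x * (x powr (p - 1) * exp (- s * x))))
           = s * s powr (p - 1) * (LBINT x:B. x powr (p - 1) * exp (- s * x))"
    by (simp add: set_lebesgue_integral_def)
  also have "s * s powr (p - 1) = s powr p"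
    using assms(1) by (simp add: powr_diff)
  finally show ?thesis .
qed

lemma lower_inc_gamma_rescale:
  assumes "0 < s"
  shows "lower_inc_gamma p s = s powr p * (LBINT x:{0<..<1}. x powr (p - 1) * exp (- s * x))"
  unfolding lower_inc_gamma_def
  by (rule set_integral_powr_exp_rescale) (use assms in \<open>auto simp: zero_less_mult_iff\<close>)

lemma upper_inc_gamma_rescale:
  assumes "0 < s"
  shows "upper_inc_gamma p s = s powr p * (LBINT x:{1<..}. x powr (p - 1) * exp (- s * x))"
  unfolding upper_inc_gamma_def
  by (rule set_integral_powr_exp_rescale) (use assms in auto)

lemma set_integral_greaterThan_0_split:
  fixes f :: "real \<Rightarrow> real"
  assumes "set_integrable lborel {0<..} f"
  shows "(LBINT x:{0<..}. f x) = (LBINT x:{0<..<1}. f x) + (LBINT x:{1<..}. f x)"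
proof -
  have int: "set_integrable lborel B f" if "B \<subseteq> {0<..}" "B \<in> sets lborel" for B
    using set_integrable_subset[OF assms] that by simp
  have set_borel_measurable_integrable: "set_borel_measurable lborel B f"
    if "set_integrable lborel B f" for B
    using that unfolding set_integrable_def set_borel_measurable_def
    by (rule borel_measurable_integrable)
  have "(LBINT x:{0<..}. f x) = (LBINT x:{0<..<1} \<union> {1<..}. f x)"
  proof (rule set_integral_cong_set)
    show "AE x in lborel. (x::real) \<in> {0<..<1} \<union> {1<..} \<longleftrightarrow> x \<in> {0<..}"
      using AE_lborel_singleton[of 1] by eventually_elim auto
  qed (intro set_borel_measurable_integrable int; auto)+
  also have "\<dots> = (LBINT x:{0<..<1}. f x) + (LBINT x:{1<..}. f x)"
    by (rule set_integral_Un) (auto intro: int)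
  finally show ?thesis .
qed

section \<open>Normal scale mixtures\<close>

definition normal_precision_mixture :: "(real \<Rightarrow> real) \<Rightarrow> real \<Rightarrow> real" where
  "normal_precision_mixture \<pi> \<phi> = (LBINT \<gamma>:{0<..}. normal_prec_density \<gamma> \<phi> * \<pi> \<gamma>)"

lemma normal_prec_density_eq:
  assumes "0 < \<gamma>"
  shows "normal_prec_density \<gamma> \<phi> = sqrt \<gamma> / sqrt (2 * pi) * exp (- (\<phi>\<^sup>2 / 2) * \<gamma>)"
  by (simp add: normal_prec_density_def real_sqrt_divide algebra_simps)

lemma set_integrable_normal_precision_mixture:
  assumes "\<phi> \<noteq> 0" and [measurable]: "\<pi> \<in> borel_measurable lborel"
    and "\<And>\<gamma>. 0 < \<gamma> \<Longrightarrow> \<bar>\<pi> \<gamma>\<bar> \<le> B / \<gamma>"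
  shows "set_integrable lborel {0<..} (\<lambda>\<gamma>. normal_prec_density \<gamma> \<phi> * \<pi> \<gamma>)"
proof -
  define s where "s = \<phi>\<^sup>2 / 2"
  have "0 < s"
    using assms(1) by (simp add: s_def)
  hence dom: "set_integrable lborel {0<..}
                (\<lambda>\<gamma>. B / sqrt (2 * pi) * (\<gamma> powr (-1/2) * exp (- s * \<gamma>)))"
    using set_integrable_powr_exp[of "-1/2" s] by simp
  show ?thesis
  proof (rule set_integrable_bound[OF dom])
    show "set_borel_measurable lborel {0<..} (\<lambda>\<gamma>. normal_prec_density \<gamma> \<phi> * \<pi> \<gamma>)"
      unfolding set_borel_measurable_def normal_prec_density_def by measurable
    have "\<bar>normal_prec_density \<gamma> \<phi> * \<pi> \<gamma>\<bar>
            \<le> \<bar>B / sqrt (2 * pi) * (\<gamma> powr (-1/2) * exp (- s * \<gamma>))\<bar>" if "0 < \<gamma>" for \<gamma>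
    proof -
      have "\<bar>normal_prec_density \<gamma> \<phi> * \<pi> \<gamma>\<bar> = sqrt \<gamma> / sqrt (2 * pi) * exp (- s * \<gamma>) * \<bar>\<pi> \<gamma>\<bar>"
        using that by (simp add: normal_prec_density_eq s_def abs_mult)
      also have "\<dots> \<le> sqrt \<gamma> / sqrt (2 * pi) * exp (- s * \<gamma>) * (B / \<gamma>)"
        using assms(3)[OF that] that by (intro mult_left_mono) auto
      also have "\<dots> = B / sqrt (2 * pi) * (\<gamma> powr (-1/2) * exp (- s * \<gamma>))"
        using that by (simp add: powr_minus_divide powr_half_sqrt field_simps)
      finally show ?thesis
        by linarith
    qed
    thus "AE \<gamma> in lborel. \<gamma> \<in> {0<..} \<longrightarrow> norm (normal_prec_density \<gamma> \<phi> * \<pi> \<gamma>)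
            \<le> norm (B / sqrt (2 * pi) * (\<gamma> powr (-1/2) * exp (- s * \<gamma>)))"
      by auto
  qed
qed

text \<open>Only the larger mixture needs to be integrable: a non-integrable Bochner integral is 0.\<close>
lemma normal_precision_mixture_mono:
  assumes "set_integrable lborel {0<..} (\<lambda>\<gamma>. normal_prec_density \<gamma> \<phi> * \<pi>' \<gamma>)"
    and "\<And>\<gamma>. 0 < \<gamma> \<Longrightarrow> \<pi> \<gamma> \<le> c * \<pi>' \<gamma>" and "\<And>\<gamma>. 0 < \<gamma> \<Longrightarrow> 0 \<le> \<pi>' \<gamma>" and "0 \<le> c"
  shows "normal_precision_mixture \<pi> \<phi> \<le> c * normal_precision_mixture \<pi>' \<phi>"
proof -
  have "normal_precision_mixture \<pi> \<phi>
          \<le> (LBINT \<gamma>. c * (indicator {0<..} \<gamma> * (normal_prec_density \<gamma> \<phi> * \<pi>' \<gamma>)))"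
    unfolding normal_precision_mixture_def set_lebesgue_integral_def
  proof (rule integral_mono')
    show "integrable lborel (\<lambda>\<gamma>. c * (indicator {0<..} \<gamma> * (normal_prec_density \<gamma> \<phi> * \<pi>' \<gamma>)))"
      using assms(1) by (simp add: set_integrable_def)
    fix \<gamma> :: real
    have "0 \<le> normal_prec_density \<gamma> \<phi>" if "0 < \<gamma>"
      using that by (simp add: normal_prec_density_def)
    thus "indicator {0<..} \<gamma> *\<^sub>R (normal_prec_density \<gamma> \<phi> * \<pi> \<gamma>)
            \<le> c * (indicator {0<..} \<gamma> * (normal_prec_density \<gamma> \<phi> * \<pi>' \<gamma>))"
      and "0 \<le> c * (indicator {0<..} \<gamma> * (normal_prec_density \<gamma> \<phi> * \<pi>' \<gamma>))"
      using assms(2,3)[of \<gamma>] assms(4) mult_left_mono[of "\<pi> \<gamma>" "c * \<pi>' \<gamma>" "normal_prec_density \<gamma> \<phi>"]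
      by (auto simp: indicator_def mult.left_commute)
  qed
  also have "\<dots> = c * normal_precision_mixture \<pi>' \<phi>"
    by (simp add: normal_precision_mixture_def set_lebesgue_integral_def)
  finally show ?thesis .
qed

lemma set_integrable_log_laplace_mixture:
  assumes "0 < a" "\<phi> \<noteq> 0"
  shows "set_integrable lborel {0<..} (\<lambda>\<gamma>. normal_prec_density \<gamma> \<phi> * log_laplace_gamma_density a \<gamma>)"
  using assms by (intro set_integrable_normal_precision_mixture[where B = "a / 2"])
    (auto simp: log_laplace_gamma_density_def divide_le_cancel)

lemma set_integrable_hths_plus_mixture:
  assumes "\<phi> \<noteq> 0"
  shows "set_integrable lborel {0<..} (\<lambda>\<gamma>. normal_prec_density \<gamma> \<phi> * hths_plus_gamma_density \<gamma>)"
proof (rule set_integrable_normal_precision_mixture[where B = "1 / (2 * pi\<^sup>2)"])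
  fix \<gamma> :: real
  assume "0 < \<gamma>"
  hence "0 \<le> hths_plus_gamma_density \<gamma>"
    by (simp add: hths_plus_gamma_density_def add_nonneg_pos)
  moreover have "hths_plus_gamma_density \<gamma> \<le> 2 / (\<gamma> * (4 * pi\<^sup>2))"
    unfolding hths_plus_gamma_density_def using \<open>0 < \<gamma>\<close>
    by (intro divide_left_mono mult_left_mono mult_pos_pos) (auto simp: add_nonneg_pos)
  ultimately show "\<bar>hths_plus_gamma_density \<gamma>\<bar> \<le> 1 / (2 * pi\<^sup>2) / \<gamma>"
    by (simp add: power2_eq_square)
qed (use assms in auto)

lemma f_HS_plus_le_log_laplace_mixture:
  assumes "0 < a" "a < 1/2" "\<phi> \<noteq> 0"
  shows "f_HS_plus \<phi>
           \<le> 2 * (exp 1 + 4 / (1 - 2 * a)) / (a * pi\<^sup>2)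
               * normal_precision_mixture (log_laplace_gamma_density a) \<phi>"
  unfolding f_HS_plus_def normal_precision_mixture_def[symmetric]
  using assms set_integrable_log_laplace_mixture hs_plus_gamma_density_le_log_laplace
  by (intro normal_precision_mixture_mono) (auto simp: log_laplace_gamma_density_def add_pos_pos)

lemma log_laplace_mixture_le_f_HTHS_plus:
  assumes "0 < a" "\<phi> \<noteq> 0"
  shows "normal_precision_mixture (log_laplace_gamma_density a) \<phi> \<le> (1 / a + a * pi\<^sup>2) * f_HTHS_plus \<phi>"
  unfolding f_HTHS_plus_def normal_precision_mixture_def[symmetric]
  using assms set_integrable_hths_plus_mixture log_laplace_le_hths_plus_gamma_density
  by (intro normal_precision_mixture_mono) (auto simp: hths_plus_gamma_density_def add_pos_pos)

section \<open>The log-Laplace mixture in terms of incomplete gamma functions\<close>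

lemma normal_prec_density_mult_log_laplace:
  assumes "0 < \<gamma>"
  shows "normal_prec_density \<gamma> \<phi> * log_laplace_gamma_density a \<gamma>
           = a / (2 * sqrt (2 * pi)) * (exp (- a * \<bar>ln \<gamma>\<bar>) * \<gamma> powr (-1/2) * exp (- (\<phi>\<^sup>2 / 2) * \<gamma>))"
  using assms unfolding log_laplace_gamma_density_def
  by (simp add: normal_prec_density_eq powr_minus_divide powr_half_sqrt real_sqrt_mult field_simps)

lemma divide_powr_half_square:
  fixes r q :: real
  assumes "0 < r"
  shows "a / (2 * sqrt (2 * pi)) / (r\<^sup>2 / 2) powr q = a * 2 powr (q - 3/2) / (sqrt pi * r powr (2 * q))"
proof -
  have sqrt: "2 * sqrt (2 * pi) = 2 powr (3/2) * sqrt pi"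
    using powr_add[of "2::real" 1 "1/2"] by (simp add: real_sqrt_mult powr_half_sqrt)
  have half_square: "(r\<^sup>2 / 2) powr q = r powr (2 * q) / 2 powr q"
    using assms by (simp add: powr_divide powr_powr flip: powr_numeral)
  have "a / (2 * sqrt (2 * pi)) / (r\<^sup>2 / 2) powr q
          = a * (2 powr q / 2 powr (3/2)) / (sqrt pi * r powr (2 * q))"
    unfolding sqrt half_square by (simp add: field_simps)
  thus ?thesis
    by (simp add: powr_diff)
qed

lemma log_laplace_mixture_below_1:
  assumes "\<phi> \<noteq> 0"
  shows "(LBINT \<gamma>:{0<..<1}. normal_prec_density \<gamma> \<phi> * log_laplace_gamma_density a \<gamma>)
           = a * 2 powr (a - 1) / (sqrt pi * \<bar>\<phi>\<bar> powr (1 + 2 * a)) * lower_inc_gamma (1/2 + a) (\<phi>\<^sup>2 / 2)"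
proof -
  define s where "s = \<phi>\<^sup>2 / 2"
  have "0 < s"
    using assms by (simp add: s_def)
  have "(LBINT \<gamma>:{0<..<1}. normal_prec_density \<gamma> \<phi> * log_laplace_gamma_density a \<gamma>)
          = a / (2 * sqrt (2 * pi)) * (LBINT \<gamma>:{0<..<1}. \<gamma> powr (1/2 + a - 1) * exp (- s * \<gamma>))"
    by (subst set_integral_mult_right[symmetric], rule set_lebesgue_integral_cong)
       (auto simp: normal_prec_density_mult_log_laplace s_def powr_def algebra_simps
             simp flip: exp_add)
  also have "\<dots> = a / (2 * sqrt (2 * pi)) / s powr (1/2 + a) * lower_inc_gamma (1/2 + a) s"
    using \<open>0 < s\<close> by (simp add: lower_inc_gamma_rescale)
  also have "a / (2 * sqrt (2 * pi)) / s powr (1/2 + a)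
               = a * 2 powr (a - 1) / (sqrt pi * \<bar>\<phi>\<bar> powr (1 + 2 * a))"
    using divide_powr_half_square[of "\<bar>\<phi>\<bar>" a "1/2 + a"] assms by (simp add: s_def)
  finally show ?thesis
    by (simp add: s_def)
qed

lemma log_laplace_mixture_above_1:
  assumes "\<phi> \<noteq> 0"
  shows "(LBINT \<gamma>:{1<..}. normal_prec_density \<gamma> \<phi> * log_laplace_gamma_density a \<gamma>)
           = a * 2 powr (- a - 1) / (sqrt pi * \<bar>\<phi>\<bar> powr (1 - 2 * a)) * upper_inc_gamma (1/2 - a) (\<phi>\<^sup>2 / 2)"
proof -
  define s where "s = \<phi>\<^sup>2 / 2"
  have "0 < s"
    using assms by (simp add: s_def)
  have exponent: "1/2 - a - 3/2 = - a - 1"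
    by simp
  have "(LBINT \<gamma>:{1<..}. normal_prec_density \<gamma> \<phi> * log_laplace_gamma_density a \<gamma>)
          = a / (2 * sqrt (2 * pi)) * (LBINT \<gamma>:{1<..}. \<gamma> powr (1/2 - a - 1) * exp (- s * \<gamma>))"
    by (subst set_integral_mult_right[symmetric], rule set_lebesgue_integral_cong)
       (auto simp: normal_prec_density_mult_log_laplace s_def powr_def algebra_simps
             simp flip: exp_add)
  also have "\<dots> = a / (2 * sqrt (2 * pi)) / s powr (1/2 - a) * upper_inc_gamma (1/2 - a) s"
    using \<open>0 < s\<close> by (simp add: upper_inc_gamma_rescale)
  also have "a / (2 * sqrt (2 * pi)) / s powr (1/2 - a)
               = a * 2 powr (- a - 1) / (sqrt pi * \<bar>\<phi>\<bar> powr (1 - 2 * a))"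
    using divide_powr_half_square[of "\<bar>\<phi>\<bar>" a "1/2 - a", unfolded exponent] assms
    by (simp add: s_def)
  finally show ?thesis
    by (simp add: s_def)
qed

lemma normal_precision_mixture_log_laplace:
  assumes "0 < a" "\<phi> \<noteq> 0"
  shows "normal_precision_mixture (log_laplace_gamma_density a) \<phi> =
           a * 2 powr (a - 1) / (sqrt pi * \<bar>\<phi>\<bar> powr (1 + 2 * a)) * lower_inc_gamma (1/2 + a) (\<phi>\<^sup>2 / 2)
         + a * 2 powr (- a - 1) / (sqrt pi * \<bar>\<phi>\<bar> powr (1 - 2 * a)) * upper_inc_gamma (1/2 - a) (\<phi>\<^sup>2 / 2)"
  unfolding normal_precision_mixture_def
  using assms by (simp add: set_integral_greaterThan_0_split set_integrable_log_laplace_mixture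
                            log_laplace_mixture_below_1 log_laplace_mixture_above_1)

theorem theorem2:
  fixes a :: real
  assumes "0 < a" and "a < 1/2"
  shows "\<exists>C D. C > 0 \<and> D > 0 \<and>
    (\<forall>\<phi>::real. \<phi> \<noteq> 0 \<longrightarrow>
      (let M = a * 2 powr (a - 1) / (sqrt pi * \<bar>\<phi>\<bar> powr (1 + 2 * a))
                 * lower_inc_gamma (1/2 + a) (\<phi>\<^sup>2 / 2)
             + a * 2 powr (- a - 1) / (sqrt pi * \<bar>\<phi>\<bar> powr (1 - 2 * a))
                 * upper_inc_gamma (1/2 - a) (\<phi>\<^sup>2 / 2)
       in C * f_HS_plus \<phi> \<le> M \<and> M \<le> D * f_HTHS_plus \<phi>))"
proof -
  define K where "K = 2 * (exp 1 + 4 / (1 - 2 * a)) / (a * pi\<^sup>2)"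
  define D where "D = 1 / a + a * pi\<^sup>2"
  have "0 < K" "0 < D"
    using assms by (simp_all add: K_def D_def add_pos_pos)
  have "1 / K * f_HS_plus \<phi> \<le> normal_precision_mixture (log_laplace_gamma_density a) \<phi>"
    if "\<phi> \<noteq> 0" for \<phi>
    using f_HS_plus_le_log_laplace_mixture[OF assms that, folded K_def] \<open>0 < K\<close>
    by (simp add: pos_divide_le_eq mult.commute)
  moreover have "normal_precision_mixture (log_laplace_gamma_density a) \<phi> \<le> D * f_HTHS_plus \<phi>"
    if "\<phi> \<noteq> 0" for \<phi>
    using log_laplace_mixture_le_f_HTHS_plus[OF assms(1) that] by (simp add: D_def)
  ultimately show ?thesis
    using \<open>0 < K\<close> \<open>0 < D\<close> normal_precision_mixture_log_laplace[OF assms(1)]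
    by (intro exI[of _ "1 / K"] exI[of _ D]) (simp add: Let_def)
qed

end
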